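(* Let $V \subset \mathbb{R}^D$ be a finite set of points in general position (all pairwise Euclidean distances distinct), with Euclidean distance $d$, and let $\alpha: V \to \mathbb{R}$ satisfy $\alpha(u) \ge 1$ for all $u \in V$. Let $E_{EMST}$ be the edge set of the Euclidean minimum spanning tree of $V$, let $E_{RNG}$ be the edge set of the relative neighborhood graph of $V$, and let $E_{MCGI}$ be the edge set of the graph $G_{MCGI}$ on $V$ defined below. Then $E_{EMST} \subseteq E_{RNG} \subseteq E_{MCGI}$, and consequently $G_{MCGI}$ is connected.
   Context: Relative neighborhood graph: $\{u,v\}$ (with $u \ne v$) is an edge of $E_{RNG}$ iff there is no witness $n \in V\setminus\{u,v\}$ with $d(n,v) \le d(u,v)$ and $d(n,u) \le d(u,v)$. MCGI graph (the paper's adaptive pruning rule): for $u \ne v$, the edge $(u,v)$ belongs to $E_{MCGI}$ iff it is not pruned, where $(u,v)$ is pruned iff there exists a witness $n \in V\setminus\{u,v\}$ with $d(n,u) \le d(u,v)$ (i.e. $n$ is no farther from $u$ than $v$) and $\alpha(u)\, d(n,v) \le d(u,v)$. An undirected edge $\{u,v\}$ is regarded as contained in $E_{MCGI}$ if $(u,v)$ or $(v,u)$ is in $E_{MCGI}$, and connectivity of $G_{MCGI}$ refers to the underlying undirected graph. *)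

theory Defs
  imports "HOL-Analysis.Analysis"
begin

text \<open>Points live in an arbitrary Euclidean space 'a (playing the role of R^D).
  Undirected edges are represented as two-element sets {u,v}.\<close>

definition all_pairs :: "'a set \<Rightarrow> 'a set set" where
  "all_pairs V = {{u, v} | u v. u \<in> V \<and> v \<in> V \<and> u \<noteq> v}"

definition general_position :: "'a::metric_space set \<Rightarrow> bool" where
  "general_position V \<longleftrightarrow>
     (\<forall>u\<in>V. \<forall>v\<in>V. \<forall>x\<in>V. \<forall>y\<in>V.
        u \<noteq> v \<longrightarrow> x \<noteq> y \<longrightarrow> dist u v = dist x y \<longrightarrow> {u, v} = {x, y})"

definition edge_rel :: "'a set set \<Rightarrow> ('a \<times> 'a) set" where
  "edge_rel E = {(x, y). {x, y} \<in> E}"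

definition graph_connected :: "'a set \<Rightarrow> 'a set set \<Rightarrow> bool" where
  "graph_connected V E \<longleftrightarrow> (\<forall>u\<in>V. \<forall>v\<in>V. (u, v) \<in> (edge_rel E)\<^sup>*)"

definition spanning_tree :: "'a set \<Rightarrow> 'a set set \<Rightarrow> bool" where
  "spanning_tree V T \<longleftrightarrow> T \<subseteq> all_pairs V \<and> graph_connected V T \<and>
     (\<forall>e\<in>T. \<not> graph_connected V (T - {e}))"

definition edge_len :: "'a::metric_space set \<Rightarrow> real" where
  "edge_len e = (THE d. \<exists>u v. e = {u, v} \<and> d = dist u v)"

definition tree_weight :: "'a::metric_space set set \<Rightarrow> real" where
  "tree_weight T = (\<Sum>e\<in>T. edge_len e)"

definition is_emst :: "'a::metric_space set \<Rightarrow> 'a set set \<Rightarrow> bool" where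
  "is_emst V T \<longleftrightarrow> spanning_tree V T \<and>
     (\<forall>T'. spanning_tree V T' \<longrightarrow> tree_weight T \<le> tree_weight T')"

definition rng_edges :: "'a::metric_space set \<Rightarrow> 'a set set" where
  "rng_edges V = {{u, v} | u v. u \<in> V \<and> v \<in> V \<and> u \<noteq> v \<and>
     \<not> (\<exists>n \<in> V - {u, v}. dist n v \<le> dist u v \<and> dist n u \<le> dist u v)}"

definition mcgi_pruned :: "'a::metric_space set \<Rightarrow> ('a \<Rightarrow> real) \<Rightarrow> 'a \<Rightarrow> 'a \<Rightarrow> bool" where
  "mcgi_pruned V \<alpha> u v \<longleftrightarrow>
     (\<exists>n \<in> V - {u, v}. dist n u \<le> dist u v \<and> \<alpha> u * dist n v \<le> dist u v)"

definition mcgi_arc :: "'a::metric_space set \<Rightarrow> ('a \<Rightarrow> real) \<Rightarrow> 'a \<Rightarrow> 'a \<Rightarrow> bool" where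
  "mcgi_arc V \<alpha> u v \<longleftrightarrow> u \<in> V \<and> v \<in> V \<and> u \<noteq> v \<and> \<not> mcgi_pruned V \<alpha> u v"

definition mcgi_edges :: "'a::metric_space set \<Rightarrow> ('a \<Rightarrow> real) \<Rightarrow> 'a set set" where
  "mcgi_edges V \<alpha> = {{u, v} | u v. mcgi_arc V \<alpha> u v \<or> mcgi_arc V \<alpha> v u}"

end

theory Submission
  imports Defs
begin

text \<open>If a pair \<open>{u, v}\<close> is not an RNG edge, general position yields a witness \<open>n\<close> strictly
  closer to both \<open>u\<close> and \<open>v\<close> than they are to each other. Hence any two points are joined by
  RNG edges, by well-founded induction on \<open>dist u v\<close> over the finitely many pairs; this gives
  connectivity of the RNG, and of \<open>G_MCGI\<close> once \<open>E_RNG \<subseteq> E_MCGI\<close> is known, without having to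
  show that an EMST exists. An RNG edge survives MCGI pruning because \<open>\<alpha> u \<ge> 1\<close> makes the MCGI
  witness condition stronger than the RNG one. Finally, if an EMST edge \<open>{u, v}\<close> had such a
  witness \<open>n\<close>, deleting \<open>{u, v}\<close> leaves \<open>n\<close> connected to one endpoint, say \<open>u\<close>; adding
  \<open>{n, v}\<close> reconnects the tree and strictly decreases its weight.\<close>

lemma edge_len_doubleton [simp]: "edge_len {x, y} = dist x y"
proof -
  have "(\<exists>a b. {x, y} = {a, b} \<and> d = dist a b) \<longleftrightarrow> d = dist x y" for d
    by (auto simp: doubleton_eq_iff dist_commute)
  then show ?thesis unfolding edge_len_def by simp
qed

lemma finite_all_pairs: "finite V \<Longrightarrow> finite (all_pairs V)"
proof -
  assume "finite V"
  have "all_pairs V \<subseteq> (\<lambda>(u, v). {u, v}) ` (V \<times> V)"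
    unfolding all_pairs_def by auto
  then show ?thesis using \<open>finite V\<close> by (meson finite_SigmaI finite_imageI finite_subset)
qed

lemma doubleton_in_all_pairsD:
  "{u, v} \<in> all_pairs V \<Longrightarrow> u \<in> V \<and> v \<in> V \<and> u \<noteq> v"
  unfolding all_pairs_def by (auto simp: doubleton_eq_iff)

lemma edge_len_nonneg: "e \<in> all_pairs V \<Longrightarrow> edge_len e \<ge> 0"
  unfolding all_pairs_def by auto

lemma sym_edge_rel: "sym (edge_rel E)"
  by (auto simp: edge_rel_def insert_commute intro: symI)

lemma rtrancl_edge_rel_mono: "A \<subseteq> B \<Longrightarrow> (edge_rel A)\<^sup>* \<subseteq> (edge_rel B)\<^sup>*"
  by (rule rtrancl_mono) (auto simp: edge_rel_def)

lemma general_position_dist_less: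
  assumes "general_position V" "x \<in> V" "y \<in> V" "u \<in> V" "v \<in> V"
    and "x \<noteq> y" "{x, y} \<noteq> {u, v}" "dist x y \<le> dist u v"
  shows "dist x y < dist u v"
  using assms unfolding general_position_def by (metis dist_eq_0_iff order_le_less zero_less_dist_iff)

lemma not_in_rng_edges_witness:
  assumes "general_position V" "u \<in> V" "v \<in> V" "u \<noteq> v" "{u, v} \<notin> rng_edges V"
  obtains n where "n \<in> V - {u, v}" "dist n u < dist u v" "dist n v < dist u v"
proof -
  obtain n where n: "n \<in> V - {u, v}" "dist n v \<le> dist u v" "dist n u \<le> dist u v"
    using assms(2-5) unfolding rng_edges_def by blast
  have "{n, u} \<noteq> {u, v}" "{n, v} \<noteq> {u, v}"
    using n(1) by (auto simp: doubleton_eq_iff)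
  then show ?thesis
    using that n assms(1-3) general_position_dist_less[of V n] by auto
qed

lemma wf_shorter_pair:
  fixes V :: "'a::metric_space set"
  assumes "finite V"
  shows "wf {((x, y), (u, v)). x \<in> V \<and> y \<in> V \<and> u \<in> V \<and> v \<in> V \<and> dist x y < dist u v}"
    (is "wf ?R")
proof (rule finite_acyclic_wf)
  have "?R \<subseteq> (V \<times> V) \<times> (V \<times> V)" by auto
  then show "finite ?R" using assms by (simp add: finite_subset)
  have "trans ?R" by (auto intro!: transI)
  moreover have "irrefl ?R" by (auto simp: irrefl_def)
  ultimately show "acyclic ?R" by (simp add: acyclic_irrefl trancl_id)
qed

lemma graph_connected_if_shortcuts:
  fixes V :: "'a::metric_space set"
  assumes "finite V"
    and shortcut: "\<And>u v. u \<in> V \<Longrightarrow> v \<in> V \<Longrightarrow> u \<noteq> v \<Longrightarrow> {u, v} \<notin> E \<Longrightarrow>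
                    \<exists>n\<in>V. dist u n < dist u v \<and> dist n v < dist u v"
  shows "graph_connected V E"
  unfolding graph_connected_def
proof (intro ballI)
  fix u v assume "u \<in> V" "v \<in> V"
  then show "(u, v) \<in> (edge_rel E)\<^sup>*"
  proof (induction "(u, v)" arbitrary: u v rule: wf_induct_rule[OF wf_shorter_pair[OF assms(1)], case_names less])
    case less
    consider "u = v" | "{u, v} \<in> E" | "u \<noteq> v" "{u, v} \<notin> E" by blast
    then show ?case
    proof cases
      case 3
      then obtain n where "n \<in> V" "dist u n < dist u v" "dist n v < dist u v"
        using shortcut less.prems by blast
      then have "(u, n) \<in> (edge_rel E)\<^sup>*" "(n, v) \<in> (edge_rel E)\<^sup>*"
        using less by auto
      then show ?thesis by (rule rtrancl_trans)
    qed (auto simp: edge_rel_def)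
  qed
qed

lemma graph_connected_rng:
  assumes "finite V" "general_position V"
  shows "graph_connected V (rng_edges V)"
proof (rule graph_connected_if_shortcuts[OF assms(1)])
  fix u v assume "u \<in> V" "v \<in> V" "u \<noteq> v" "{u, v} \<notin> rng_edges V"
  then obtain n where "n \<in> V" "dist n u < dist u v" "dist n v < dist u v"
    using not_in_rng_edges_witness[OF assms(2)] by blast
  then show "\<exists>n\<in>V. dist u n < dist u v \<and> dist n v < dist u v"
    by (auto simp: dist_commute)
qed

lemma rng_edges_subset_mcgi_edges:
  assumes "\<forall>u\<in>V. \<alpha> u \<ge> 1"
  shows "rng_edges V \<subseteq> mcgi_edges V \<alpha>"
proof
  fix e assume "e \<in> rng_edges V"
  then obtain u v where e: "e = {u, v}" "u \<in> V" "v \<in> V" "u \<noteq> v"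
    and no_witness: "\<not> (\<exists>n \<in> V - {u, v}. dist n v \<le> dist u v \<and> dist n u \<le> dist u v)"
    unfolding rng_edges_def by blast
  have "\<not> mcgi_pruned V \<alpha> u v"
  proof
    assume "mcgi_pruned V \<alpha> u v"
    then obtain n where n: "n \<in> V - {u, v}" "dist n u \<le> dist u v" "\<alpha> u * dist n v \<le> dist u v"
      unfolding mcgi_pruned_def by blast
    have "dist n v \<le> \<alpha> u * dist n v"
      using assms e(2) by (simp add: mult_le_cancel_right1)
    then show False using no_witness n by auto
  qed
  then have "mcgi_arc V \<alpha> u v" using e unfolding mcgi_arc_def by blast
  then show "e \<in> mcgi_edges V \<alpha>" unfolding mcgi_edges_def using e by blast
qed

lemma rtrancl_edge_rel_Diff_doubleton:
  assumes "(u, x) \<in> (edge_rel T)\<^sup>*"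
  shows "(u, x) \<in> (edge_rel (T - {{u, v}}))\<^sup>* \<or> (v, x) \<in> (edge_rel (T - {{u, v}}))\<^sup>*"
  using assms
proof (induction rule: rtrancl_induct)
  case (step y z)
  show ?case
  proof (cases "{y, z} = {u, v}")
    case True
    then have "z = u \<or> z = v" by (auto simp: doubleton_eq_iff)
    then show ?thesis by auto
  next
    case False
    then have "(y, z) \<in> edge_rel (T - {{u, v}})" using step.hyps(2) by (auto simp: edge_rel_def)
    then show ?thesis using step.IH by (meson rtrancl.rtrancl_into_rtrancl)
  qed
qed simp

lemma spanning_tree_subset:
  assumes "finite T" "T \<subseteq> all_pairs V" "graph_connected V T"
  obtains S where "S \<subseteq> T" "spanning_tree V S"
proof -
  let ?P = "\<lambda>S. S \<subseteq> T \<and> graph_connected V S"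
  obtain S where S: "?P S" "\<And>S'. ?P S' \<Longrightarrow> card S \<le> card S'"
    using ex_has_least_nat[of ?P T card] assms by blast
  have "finite S" using S(1) assms(1) finite_subset by blast
  have "\<not> graph_connected V (S - {e})" if "e \<in> S" for e
  proof
    assume "graph_connected V (S - {e})"
    then have "card S \<le> card (S - {e})" using S by blast
    moreover have "card (S - {e}) < card S" using \<open>finite S\<close> that by (rule card_Diff1_less)
    ultimately show False by simp
  qed
  then have "spanning_tree V S" unfolding spanning_tree_def using S assms(2) by blast
  then show ?thesis using that S by blast
qed

lemma graph_connected_exchange:
  assumes "graph_connected V T" "{a, b} \<in> T" "(a, n) \<in> (edge_rel (T - {{a, b}}))\<^sup>*"
  shows "graph_connected V (insert {n, b} (T - {{a, b}}))"
proof -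
  define T' where "T' = insert {n, b} (T - {{a, b}})"
  have "(a, n) \<in> (edge_rel T')\<^sup>*"
    using assms(3) rtrancl_edge_rel_mono[of "T - {{a, b}}" T'] by (auto simp: T'_def)
  moreover have "(n, b) \<in> edge_rel T'" by (simp add: edge_rel_def T'_def)
  ultimately have ab: "(a, b) \<in> (edge_rel T')\<^sup>*" by simp
  have ba: "(b, a) \<in> (edge_rel T')\<^sup>*"
    using symD[OF sym_rtrancl[OF sym_edge_rel] ab] .
  have "edge_rel T \<subseteq> (edge_rel T')\<^sup>*"
  proof
    fix p assume "p \<in> edge_rel T"
    then obtain x y where p: "p = (x, y)" "{x, y} \<in> T" unfolding edge_rel_def by auto
    show "p \<in> (edge_rel T')\<^sup>*"
    proof (cases "{x, y} = {a, b}")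
      case True
      then show ?thesis using p ab ba by (auto simp: doubleton_eq_iff)
    next
      case False
      then have "(x, y) \<in> edge_rel T'" using p unfolding edge_rel_def T'_def by auto
      then show ?thesis using p by auto
    qed
  qed
  then have "(edge_rel T)\<^sup>* \<subseteq> (edge_rel T')\<^sup>*" by (rule rtrancl_subset_rtrancl)
  then show ?thesis using assms(1) unfolding graph_connected_def T'_def by blast
qed

lemma tree_weight_exchange:
  assumes "finite T" "e \<in> T" "edge_len f \<ge> 0"
  shows "tree_weight (insert f (T - {e})) \<le> tree_weight T - edge_len e + edge_len f"
proof -
  have "tree_weight (insert f (T - {e})) \<le> tree_weight (T - {e}) + edge_len f"
    unfolding tree_weight_def using assms by (simp add: sum.insert_if)
  also have "tree_weight (T - {e}) = tree_weight T - edge_len e"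
    unfolding tree_weight_def using assms by (simp add: sum_diff1)
  finally show ?thesis by simp
qed

lemma emst_exchange:
  fixes V :: "'a::metric_space set"
  assumes "finite V" "is_emst V T" "{a, b} \<in> T" "n \<in> V" "n \<noteq> b"
    and "(a, n) \<in> (edge_rel (T - {{a, b}}))\<^sup>*"
  shows "dist a b \<le> dist n b"
proof -
  define T' where "T' = insert {n, b} (T - {{a, b}})"
  have T: "T \<subseteq> all_pairs V" "graph_connected V T"
    using assms(2) unfolding is_emst_def spanning_tree_def by auto
  have "finite T" using T(1) finite_all_pairs[OF assms(1)] finite_subset by blast
  have "b \<in> V" using T(1) assms(3) doubleton_in_all_pairsD[of a b V] by blast
  then have nb: "{n, b} \<in> all_pairs V" using assms(4,5) unfolding all_pairs_def by blast
  have T'_pairs: "T' \<subseteq> all_pairs V" using T(1) nb by (auto simp: T'_def)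
  have "finite T'" using \<open>finite T\<close> by (simp add: T'_def)
  moreover have "graph_connected V T'"
    unfolding T'_def using graph_connected_exchange[OF T(2) assms(3,6)] .
  ultimately obtain S where S: "S \<subseteq> T'" "spanning_tree V S"
    using spanning_tree_subset T'_pairs by blast
  have "tree_weight T \<le> tree_weight S"
    using assms(2) S(2) unfolding is_emst_def by blast
  also have "\<dots> \<le> tree_weight T'"
    unfolding tree_weight_def
    by (intro sum_mono2 \<open>finite T'\<close> S(1)) (use T'_pairs edge_len_nonneg in blast)
  also have "\<dots> \<le> tree_weight T - dist a b + dist n b"
    unfolding T'_def using tree_weight_exchange[OF \<open>finite T\<close> assms(3) edge_len_nonneg[OF nb]]
    by simp
  finally show ?thesis by simp
qed

lemma emst_subset_rng_edges:
  assumes "finite V" "general_position V" "is_emst V T"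
  shows "T \<subseteq> rng_edges V"
proof
  fix e assume "e \<in> T"
  have T: "T \<subseteq> all_pairs V" "graph_connected V T"
    using assms(3) unfolding is_emst_def spanning_tree_def by auto
  then obtain u v where e: "e = {u, v}" "u \<in> V" "v \<in> V" "u \<noteq> v"
    using \<open>e \<in> T\<close> unfolding all_pairs_def by blast
  show "e \<in> rng_edges V"
  proof (rule ccontr)
    assume "e \<notin> rng_edges V"
    then obtain n where n: "n \<in> V - {u, v}" "dist n u < dist u v" "dist n v < dist u v"
      using not_in_rng_edges_witness[OF assms(2) e(2-4)] e(1) by blast
    have "(u, n) \<in> (edge_rel T)\<^sup>*" using T(2) e n unfolding graph_connected_def by blast
    then consider "(u, n) \<in> (edge_rel (T - {{u, v}}))\<^sup>*" | "(v, n) \<in> (edge_rel (T - {{v, u}}))\<^sup>*"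
      using rtrancl_edge_rel_Diff_doubleton[of u n T v] by (auto simp: insert_commute)
    then show False
    proof cases
      case 1
      then have "dist u v \<le> dist n v"
        using emst_exchange[OF assms(1,3)] \<open>e \<in> T\<close> e(1) n(1) by blast
      then show False using n(3) by simp
    next
      case 2
      then have "dist v u \<le> dist n u"
        using emst_exchange[OF assms(1,3)] \<open>e \<in> T\<close> e(1) n(1) by (auto simp: insert_commute)
      then show False using n(2) by (simp add: dist_commute)
    qed
  qed
qed

theorem mainTheorem3:
  fixes V :: "'a::euclidean_space set" and \<alpha> :: "'a \<Rightarrow> real"
  assumes "finite V"
    and "general_position V"
    and "\<forall>u\<in>V. \<alpha> u \<ge> 1"
  shows "(\<forall>T. is_emst V T \<longrightarrow> T \<subseteq> rng_edges V)
         \<and> rng_edges V \<subseteq> mcgi_edges V \<alpha>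
         \<and> graph_connected V (mcgi_edges V \<alpha>)"
proof (intro conjI allI impI)
  show "\<And>T. is_emst V T \<Longrightarrow> T \<subseteq> rng_edges V"
    using emst_subset_rng_edges assms(1,2) by blast
  show sub: "rng_edges V \<subseteq> mcgi_edges V \<alpha>"
    using rng_edges_subset_mcgi_edges assms(3) .
  show "graph_connected V (mcgi_edges V \<alpha>)"
    using graph_connected_rng[OF assms(1,2)] rtrancl_edge_rel_mono[OF sub]
    unfolding graph_connected_def by blast
qed

end
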